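(* For each $n\geq 2$, there exist sets $D_n\subseteq\mathbb{Q}^n$ which are dense in $\mathbb{Q}^n$ (with respect to the product topology) and such that no two distinct points of $D_n$ are colinear.
   Context: Two points of $\mathbb{Q}^n$ are colinear if they share a common coordinate, i.e. $a_i=b_i$ for some $i\leq n$. *)

theory Defs
  imports "HOL-Analysis.Analysis"
begin

text \<open>Q^n is represented as the set of vectors in R^n all of whose coordinates are
rational; its product topology coincides with the subspace topology inherited from R^n.\<close>

definition rat_vecs :: "(real ^ 'n) set" where
  "rat_vecs = {x. \<forall>i. x $ i \<in> \<rat>}"

definition colinear :: "real ^ 'n \<Rightarrow> real ^ 'n \<Rightarrow> bool" where
  "colinear a b \<longleftrightarrow> (\<exists>i. a $ i = b $ i)"

end

theory Submission
  imports Defs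
begin

text \<open>Since \<open>\<rat>\<^sup>n\<close> is countable, the balls with rational centre and radius 1/(m+1) can be
  enumerated, and the points of \<open>D\<close> chosen one at a time: the k-th point is a rational point in
  the k-th ball whose coordinates avoid all coordinates of the points chosen before.
  Such a point exists because in each coordinate only finitely many values are forbidden, while
  every interval contains infinitely many rationals.\<close>

lemma Rats_avoiding_finite:
  fixes c e :: real
  assumes "e > 0" and "finite F"
  obtains t where "t \<in> \<rat>" and "\<bar>t - c\<bar> < e" and "t \<notin> F"
proof -
  define V where "V = {c - e<..<c + e} - F"
  have "open V"
    unfolding V_def using assms(2) by (intro open_Diff finite_imp_closed) auto
  moreover have "V \<noteq> {}"
    unfolding V_def using assms finite_subset[of "{c - e<..<c + e}" F]
      infinite_Ioo[of "c - e" "c + e"] by auto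
  ultimately have "V \<inter> \<rat> \<noteq> {}"
    using open_Int_closure_eq_empty[of V \<rat>] by (simp add: Rats_closure_real)
  then obtain t where "t \<in> \<rat>" "c - e < t" "t < c + e" "t \<notin> F"
    unfolding V_def by auto
  then show thesis
    using that by (simp add: abs_less_iff algebra_simps)
qed

lemma rat_vecs_avoiding_finite:
  fixes c :: "real ^ 'n"
  assumes "e > 0" and "finite F"
  obtains y where "y \<in> rat_vecs" and "dist y c < e" and "\<And>i. y $ i \<notin> F"
proof -
  define e' where "e' = e / real CARD('n)"
  have "e' > 0"
    unfolding e'_def using assms(1) by simp
  then have "\<forall>i. \<exists>t. t \<in> \<rat> \<and> \<bar>t - c $ i\<bar> < e' \<and> t \<notin> F"
    using Rats_avoiding_finite[OF _ assms(2)] by metis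
  then obtain t where t: "\<And>i. t i \<in> \<rat> \<and> \<bar>t i - c $ i\<bar> < e' \<and> t i \<notin> F"
    by metis
  define y where "y = (\<chi> i. t i)"
  have "dist y c \<le> (\<Sum>i\<in>UNIV. \<bar>(y - c) $ i\<bar>)"
    unfolding dist_norm by (rule norm_le_l1_cart)
  also have "\<dots> < (\<Sum>i\<in>(UNIV :: 'n set). e')"
    using t by (intro sum_strict_mono) (auto simp: y_def)
  also have "\<dots> = e"
    unfolding e'_def by simp
  finally have "dist y c < e" .
  moreover have "y \<in> rat_vecs"
    unfolding rat_vecs_def y_def using t by simp
  ultimately show thesis
    using that t by (simp add: y_def)
qed

lemma countable_rat_vecs: "countable rat_vecs"
  unfolding rat_vecs_def by (intro countable_vector countable_rat)

lemma greedy_pairwise_sequence: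
  assumes extend: "\<And>k F. finite F \<Longrightarrow> \<exists>y\<in>U k. \<forall>z\<in>F. R y z \<and> R z y"
  obtains p :: "nat \<Rightarrow> 'a" where "\<And>k. p k \<in> U k" and "pairwise R (range p)"
proof -
  define pick where "pick k F = (SOME y. y \<in> U k \<and> (\<forall>z\<in>F. R y z \<and> R z y))" for k F
  define P where "P = rec_nat {} (\<lambda>k F. insert (pick k F) F)"
  define p where "p k = pick k (P k)" for k
  have P_0: "P 0 = {}" and P_Suc: "P (Suc k) = insert (p k) (P k)" for k
    by (simp_all add: P_def p_def)
  have P_eq: "P k = p ` {..<k}" for k
    by (induction k) (simp_all add: P_0 P_Suc lessThan_Suc)
  have p: "p k \<in> U k \<and> (\<forall>z\<in>P k. R (p k) z \<and> R z (p k))" for k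
    unfolding p_def pick_def by (rule someI_ex) (use extend[of "P k"] in \<open>auto simp: P_eq\<close>)
  have "R (p j) (p k) \<and> R (p k) (p j)" if "j < k" for j k
    using p[of k] that by (auto simp: P_eq)
  then have "pairwise R (range p)"
    unfolding pairwise_def by (metis linorder_neqE_nat rangeE)
  with p that show thesis
    by blast
qed

lemma countable_dense_pairwise_subset:
  fixes S :: "'a::metric_space set"
  assumes "countable S"
    and extend: "\<And>x e F. x \<in> S \<Longrightarrow> e > 0 \<Longrightarrow> finite F \<Longrightarrow>
      \<exists>y\<in>S. dist y x < e \<and> (\<forall>z\<in>F. R y z \<and> R z y)"
  obtains D where "D \<subseteq> S" and "S \<subseteq> closure D" and "pairwise R D"
proof (cases "S = {}")
  case True
  with that show thesis
    by simp
next
  case False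
  define balls where "balls = S \<times> (UNIV :: nat set)"
  define c where "c k = from_nat_into balls k" for k
  have "countable balls"
    unfolding balls_def using assms(1) by simp
  have c_in: "c k \<in> balls" for k
    unfolding c_def balls_def using False by (simp add: from_nat_into)
  define U where "U k = {y \<in> S. dist y (fst (c k)) < 1 / Suc (snd (c k))}" for k
  have "\<exists>y\<in>U k. \<forall>z\<in>F. R y z \<and> R z y" if "finite F" for k F
    using extend[of "fst (c k)" "1 / Suc (snd (c k))" F] c_in[of k] that
    by (auto simp: U_def balls_def)
  then obtain p where p_in: "\<And>k. p k \<in> U k" and "pairwise R (range p)"
    using greedy_pairwise_sequence by metis
  have "x \<in> closure (range p)" if "x \<in> S" for x
  proof -
    have "\<exists>y\<in>range p. dist y x < e" if "e > 0" for e
    proof -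
      obtain m :: nat where "1 / Suc m < e"
        using nat_approx_posE[OF \<open>e > 0\<close>] by metis
      moreover obtain k where "c k = (x, m)"
        using from_nat_into_surj[OF \<open>countable balls\<close>] \<open>x \<in> S\<close>
        by (auto simp: c_def balls_def)
      ultimately have "dist (p k) x < e"
        using p_in[of k] by (simp add: U_def)
      then show ?thesis
        by blast
    qed
    then show ?thesis
      by (simp add: closure_approachable)
  qed
  moreover have "range p \<subseteq> S"
    using p_in by (auto simp: U_def)
  ultimately show thesis
    using that \<open>pairwise R (range p)\<close> by blast
qed

theorem proposition1p4:
  assumes "CARD('n) \<ge> 2"
  shows "\<exists>D :: (real ^ 'n) set. D \<subseteq> rat_vecs \<and> rat_vecs \<subseteq> closure D \<and>
           (\<forall>a\<in>D. \<forall>b\<in>D. a \<noteq> b \<longrightarrow> \<not> colinear a b)"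
proof -
  have "\<exists>y\<in>rat_vecs. dist y x < e \<and> (\<forall>z\<in>F. \<not> colinear y z \<and> \<not> colinear z y)"
    if "e > 0" and "finite F" for x :: "real ^ 'n" and e F
  proof -
    define coords where "coords = (\<Union>z\<in>F. range (($) z))"
    have "finite coords"
      unfolding coords_def using \<open>finite F\<close> by simp
    then obtain y where "y \<in> rat_vecs" "dist y x < e" "\<And>i. y $ i \<notin> coords"
      using rat_vecs_avoiding_finite[OF \<open>e > 0\<close>] by metis
    then show ?thesis
      unfolding colinear_def coords_def by (metis UN_I rangeI)
  qed
  then obtain D :: "(real ^ 'n) set"
    where "D \<subseteq> rat_vecs" "rat_vecs \<subseteq> closure D" "pairwise (\<lambda>a b. \<not> colinear a b) D"
    using countable_dense_pairwise_subset[OF countable_rat_vecs] by metis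
  then show ?thesis
    unfolding pairwise_def by blast
qed

end
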